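(* Let $\Upsilon$ be a finite alphabet with a partition $\{\Upsilon_0,\Upsilon_1\}$, $|\Upsilon_0|=n_0$, $|\Upsilon_1|=n_1$, and let $(\eta,\omega)=((\eta_\ell)_{\ell\ge1},(\omega_\ell)_{\ell\ge1})$ be a pair of nonnegative integer sequences, each with finite support. Then there exists an exhaustive prefix-free list over $\Upsilon$ with length distribution $(\eta,\omega)$ if and only if there exists a pair of nonnegative integer sequences $(y_\ell)_{\ell\ge0},(z_\ell)_{\ell\ge0}$ with finite support, with $y_0=1$ and $z_0=0$, such that for every $\ell\ge1$: $\eta_\ell=n_0y_{\ell-1}+n_1z_{\ell-1}-y_\ell$ and $\omega_\ell=n_1y_{\ell-1}+n_0z_{\ell-1}-z_\ell$.
   Context: A word over $\Upsilon$ is even (resp. odd) if it contains an even (resp. odd) number of symbols from $\Upsilon_1$. A finite list $\mathcal{L}$ of nonempty words over $\Upsilon$ is prefix-free if no word in it is a prefix of another, and exhaustive if every word over $\Upsilon$ either has a prefix in $\mathcal{L}$ or is a prefix of some word in $\mathcal{L}$. Its length distribution is $(\eta,\omega)$ where $\eta_\ell$ (resp. $\omega_\ell$) is the number of even (resp. odd) words of length $\ell$ in $\mathcal{L}$. *)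

theory Defs
  imports Main "HOL-Library.Sublist"
begin

definition word_over :: "'a set \<Rightarrow> 'a list \<Rightarrow> bool" where
  "word_over Y w \<longleftrightarrow> set w \<subseteq> Y"

definition even_word :: "'a set \<Rightarrow> 'a list \<Rightarrow> bool" where
  "even_word Y1 w \<longleftrightarrow> even (length (filter (\<lambda>c. c \<in> Y1) w))"

definition odd_word :: "'a set \<Rightarrow> 'a list \<Rightarrow> bool" where
  "odd_word Y1 w \<longleftrightarrow> odd (length (filter (\<lambda>c. c \<in> Y1) w))"

definition prefix_free_list :: "'a set \<Rightarrow> 'a list list \<Rightarrow> bool" where
  "prefix_free_list Y L \<longleftrightarrow>
     (\<forall>w\<in>set L. w \<noteq> [] \<and> word_over Y w) \<and>
     (\<forall>i<length L. \<forall>j<length L. i \<noteq> j \<longrightarrow> \<not> prefix (L ! i) (L ! j))"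

definition exhaustive_list :: "'a set \<Rightarrow> 'a list list \<Rightarrow> bool" where
  "exhaustive_list Y L \<longleftrightarrow>
     (\<forall>w. word_over Y w \<longrightarrow> (\<exists>u\<in>set L. prefix u w) \<or> (\<exists>u\<in>set L. prefix w u))"

definition has_length_distribution ::
  "'a set \<Rightarrow> 'a list list \<Rightarrow> (nat \<Rightarrow> nat) \<Rightarrow> (nat \<Rightarrow> nat) \<Rightarrow> bool" where
  "has_length_distribution Y1 L eta omega \<longleftrightarrow>
     (\<forall>l\<ge>1. eta l = length (filter (\<lambda>w. length w = l \<and> even_word Y1 w) L) \<and>
             omega l = length (filter (\<lambda>w. length w = l \<and> odd_word Y1 w) L))"

end

(*
  A complete prefix-free list is the set of leaves of a finite tree of words: its inner nodes
  at depth l are the words of length l over Y without a prefix in the list, and y l, z l count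
  the even and odd ones.  An inner node has card Y0 children of its own parity and card Y1 of
  the opposite parity, and every child is either an inner node or a leaf, which gives the
  recurrence.  Conversely, given y and z, grow a tree level by level, keeping y (l + 1) even and
  z (l + 1) odd children of the current inner nodes (the recurrence says there are enough of
  them) and declaring the remaining children leaves.
*)

theory Submission
  imports Defs
begin

definition card_even :: "'a set \<Rightarrow> 'a list set \<Rightarrow> nat" where
  "card_even Y1 A = card {w\<in>A. even_word Y1 w}"

definition card_odd :: "'a set \<Rightarrow> 'a list set \<Rightarrow> nat" where
  "card_odd Y1 A = card {w\<in>A. odd_word Y1 w}"

lemma odd_word_iff_not_even_word: "odd_word Y1 w \<longleftrightarrow> \<not> even_word Y1 w"
  by (simp add: even_word_def odd_word_def)

lemma even_word_snoc: "even_word Y1 (w @ [c]) \<longleftrightarrow> (even_word Y1 w \<longleftrightarrow> c \<notin> Y1)"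
  by (auto simp: even_word_def)

lemma card_even_singleton_Nil [simp]: "card_even Y1 {[]} = 1"
  and card_odd_singleton_Nil [simp]: "card_odd Y1 {[]} = 0"
  by (simp_all add: card_even_def card_odd_def even_word_def odd_word_def Collect_conv_if)

lemma card_even_plus_card_odd:
  assumes "finite A"
  shows "card_even Y1 A + card_odd Y1 A = card A"
proof -
  have "A = {w\<in>A. even_word Y1 w} \<union> {w\<in>A. odd_word Y1 w}"
    by (auto simp: odd_word_iff_not_even_word)
  then show ?thesis
    using assms unfolding card_even_def card_odd_def
    by (metis (no_types, lifting) card_Un_disjoint disjoint_iff finite_Un mem_Collect_eq
        odd_word_iff_not_even_word)
qed

lemma card_filter_Diff_add:
  assumes "finite C" "B \<subseteq> C"
  shows "card {w\<in>C - B. P w} + card {w\<in>B. P w} = card {w\<in>C. P w}"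
proof -
  have "{w\<in>C. P w} = {w\<in>C - B. P w} \<union> {w\<in>B. P w}"
    using assms(2) by auto
  moreover have "finite B"
    using assms finite_subset by blast
  ultimately show ?thesis
    using assms(1) by (simp add: card_Un_disjoint disjoint_iff)
qed

lemma card_even_Diff_add:
  "finite C \<Longrightarrow> B \<subseteq> C \<Longrightarrow> card_even Y1 (C - B) + card_even Y1 B = card_even Y1 C"
  and card_odd_Diff_add:
  "finite C \<Longrightarrow> B \<subseteq> C \<Longrightarrow> card_odd Y1 (C - B) + card_odd Y1 B = card_odd Y1 C"
  unfolding card_even_def card_odd_def by (rule card_filter_Diff_add; assumption)+

lemma obtain_subset_with_parity_cards:
  assumes "finite C" "a \<le> card_even Y1 C" "b \<le> card_odd Y1 C"
  obtains B where "B \<subseteq> C" "card_even Y1 B = a" "card_odd Y1 B = b"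
proof -
  obtain E where E: "E \<subseteq> {w\<in>C. even_word Y1 w}" "card E = a"
    using obtain_subset_with_card_n assms(2) unfolding card_even_def by metis
  obtain Od where Od: "Od \<subseteq> {w\<in>C. odd_word Y1 w}" "card Od = b"
    using obtain_subset_with_card_n assms(3) unfolding card_odd_def by metis
  have "{w\<in>E \<union> Od. even_word Y1 w} = E" "{w\<in>E \<union> Od. odd_word Y1 w} = Od"
    using E(1) Od(1) by (auto simp: odd_word_iff_not_even_word)
  then show thesis
    using that[of "E \<union> Od"] E Od by (auto simp: card_even_def card_odd_def)
qed

definition children :: "'a set \<Rightarrow> 'a list set \<Rightarrow> 'a list set" where
  "children Y A = {w @ [c] | w c. w \<in> A \<and> c \<in> Y}"

lemma children_eq_image: "children Y A = (\<lambda>(w, c). w @ [c]) ` (A \<times> Y)"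
  by (auto simp: children_def)

lemma finite_children: "finite A \<Longrightarrow> finite Y \<Longrightarrow> finite (children Y A)"
  by (simp add: children_eq_image)

lemma snoc_mem_children_iff [simp]: "w @ [c] \<in> children Y A \<longleftrightarrow> w \<in> A \<and> c \<in> Y"
  by (auto simp: children_def)

lemma Nil_notin_children [simp]: "[] \<notin> children Y A"
  by (simp add: children_def)

lemma mem_children_iff: "v \<in> children Y A \<longleftrightarrow> v \<noteq> [] \<and> butlast v \<in> A \<and> last v \<in> Y"
  by (cases v rule: rev_cases) auto

lemma card_children_filter:
  assumes "finite A" "finite Y"
  shows "card {v\<in>children Y A. P v} = (\<Sum>w\<in>A. card {c\<in>Y. P (w @ [c])})"
proof -
  have "{v\<in>children Y A. P v} = (\<Union>w\<in>A. (\<lambda>c. w @ [c]) ` {c\<in>Y. P (w @ [c])})"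
    by (auto simp: children_def)
  also have "card \<dots> = (\<Sum>w\<in>A. card ((\<lambda>c. w @ [c]) ` {c\<in>Y. P (w @ [c])}))"
    using assms by (intro card_UN_disjoint) auto
  also have "\<dots> = (\<Sum>w\<in>A. card {c\<in>Y. P (w @ [c])})"
    by (intro sum.cong refl card_image) (auto intro: inj_onI)
  finally show ?thesis .
qed

context
  fixes Y Y0 Y1 :: "'a set"
  assumes finite: "finite Y" and partition: "Y0 \<union> Y1 = Y" "Y0 \<inter> Y1 = {}"
begin

lemma card_even_children:
  assumes "finite A"
  shows "card_even Y1 (children Y A) = card Y0 * card_even Y1 A + card Y1 * card_odd Y1 A"
proof -
  have "{c\<in>Y. even_word Y1 (w @ [c])} = (if even_word Y1 w then Y0 else Y1)" for w
    using partition by (auto simp: even_word_snoc)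
  then have "card_even Y1 (children Y A) = (\<Sum>w\<in>A. if even_word Y1 w then card Y0 else card Y1)"
    using assms finite by (simp add: card_even_def card_children_filter if_distrib[of card])
  also have "\<dots> = (\<Sum>w\<in>{w\<in>A. even_word Y1 w}. card Y0) + (\<Sum>w\<in>{w\<in>A. odd_word Y1 w}. card Y1)"
    using assms by (simp add: sum.If_cases odd_word_iff_not_even_word Collect_conj_eq Int_commute
        Compl_eq)
  finally show ?thesis
    by (simp add: card_even_def card_odd_def)
qed

lemma card_odd_children:
  assumes "finite A"
  shows "card_odd Y1 (children Y A) = card Y1 * card_even Y1 A + card Y0 * card_odd Y1 A"
proof -
  have "{c\<in>Y. odd_word Y1 (w @ [c])} = (if even_word Y1 w then Y1 else Y0)" for w
    using partition by (auto simp: even_word_snoc odd_word_iff_not_even_word)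
  then have "card_odd Y1 (children Y A) = (\<Sum>w\<in>A. if even_word Y1 w then card Y1 else card Y0)"
    using assms finite by (simp add: card_odd_def card_children_filter if_distrib[of card])
  also have "\<dots> = (\<Sum>w\<in>{w\<in>A. even_word Y1 w}. card Y1) + (\<Sum>w\<in>{w\<in>A. odd_word Y1 w}. card Y0)"
    using assms by (simp add: sum.If_cases odd_word_iff_not_even_word Collect_conj_eq Int_commute
        Compl_eq)
  finally show ?thesis
    by (simp add: card_even_def card_odd_def)
qed

end

definition complete_prefix_code :: "'a set \<Rightarrow> 'a list set \<Rightarrow> bool" where
  "complete_prefix_code Y S \<longleftrightarrow>
     finite S \<and> (\<forall>w\<in>S. w \<noteq> [] \<and> set w \<subseteq> Y) \<and> (\<forall>u\<in>S. \<forall>v\<in>S. prefix u v \<longrightarrow> u = v) \<and>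
     (\<forall>w. set w \<subseteq> Y \<longrightarrow> (\<exists>u\<in>S. prefix u w) \<or> (\<exists>u\<in>S. prefix w u))"

lemma prefix_free_exhaustive_list_iff:
  "prefix_free_list Y L \<and> exhaustive_list Y L \<longleftrightarrow> distinct L \<and> complete_prefix_code Y (set L)"
proof -
  have "(\<forall>i<length L. \<forall>j<length L. i \<noteq> j \<longrightarrow> \<not> prefix (L ! i) (L ! j)) \<longleftrightarrow>
        distinct L \<and> (\<forall>u\<in>set L. \<forall>v\<in>set L. prefix u v \<longrightarrow> u = v)"
    by (smt (verit, ccfv_SIG) distinct_conv_nth in_set_conv_nth prefix_order.order_refl)
  then show ?thesis
    by (auto simp: prefix_free_list_def exhaustive_list_def complete_prefix_code_def word_over_def)
qed

lemma has_length_distribution_iff: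
  assumes "distinct L"
  shows "has_length_distribution Y1 L eta omega \<longleftrightarrow>
     (\<forall>l\<ge>1. eta l = card_even Y1 {w\<in>set L. length w = l} \<and> omega l = card_odd Y1 {w\<in>set L. length w = l})"
proof -
  have "length (filter (\<lambda>w. length w = l \<and> P w) L) = card {w\<in>{w\<in>set L. length w = l}. P w}"
    for l P
  proof -
    have "length (filter (\<lambda>w. length w = l \<and> P w) L) = card ({w. length w = l \<and> P w} \<inter> set L)"
      by (rule distinct_length_filter[OF assms])
    also have "{w. length w = l \<and> P w} \<inter> set L = {w\<in>{w\<in>set L. length w = l}. P w}"
      by auto
    finally show ?thesis .
  qed
  then show ?thesis
    by (simp only: has_length_distribution_def card_even_def card_odd_def)
qed

lemma ex_code_list_iff_ex_complete_prefix_code: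
  "(\<exists>L. prefix_free_list Y L \<and> exhaustive_list Y L \<and> has_length_distribution Y1 L eta omega) \<longleftrightarrow>
   (\<exists>S. complete_prefix_code Y S \<and>
      (\<forall>l\<ge>1. eta l = card_even Y1 {w\<in>S. length w = l} \<and> omega l = card_odd Y1 {w\<in>S. length w = l}))"
  (is "_ \<longleftrightarrow> (\<exists>S. ?code S)")
proof
  assume "\<exists>L. prefix_free_list Y L \<and> exhaustive_list Y L \<and> has_length_distribution Y1 L eta omega"
  then obtain L where L: "prefix_free_list Y L \<and> exhaustive_list Y L"
    "has_length_distribution Y1 L eta omega"
    by blast
  from L(1) have code: "distinct L" "complete_prefix_code Y (set L)"
    unfolding prefix_free_exhaustive_list_iff by blast+
  from L(2) have "?code (set L)"
    unfolding has_length_distribution_iff[OF code(1)] using code(2) by blast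
  then show "\<exists>S. ?code S" ..
next
  assume "\<exists>S. ?code S"
  then obtain S where S: "complete_prefix_code Y S"
    "\<forall>l\<ge>1. eta l = card_even Y1 {w\<in>S. length w = l} \<and> omega l = card_odd Y1 {w\<in>S. length w = l}"
    by blast
  then have "finite S"
    by (simp add: complete_prefix_code_def)
  then obtain L where L: "set L = S" "distinct L"
    using finite_distinct_list by blast
  have "prefix_free_list Y L \<and> exhaustive_list Y L"
    unfolding prefix_free_exhaustive_list_iff using L S(1) by blast
  moreover have "has_length_distribution Y1 L eta omega"
    unfolding has_length_distribution_iff[OF L(2)] using L(1) S(2) by blast
  ultimately show "\<exists>L. prefix_free_list Y L \<and> exhaustive_list Y L \<and> has_length_distribution Y1 L eta omega"
    by blast
qed

text \<open>The system of the theorem with the subtractions moved to the other side.\<close>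

definition parity_recurrence ::
  "nat \<Rightarrow> nat \<Rightarrow> (nat \<Rightarrow> nat) \<Rightarrow> (nat \<Rightarrow> nat) \<Rightarrow> (nat \<Rightarrow> nat) \<Rightarrow> (nat \<Rightarrow> nat) \<Rightarrow> bool" where
  "parity_recurrence n0 n1 eta omega y z \<longleftrightarrow>
     finite {l. y l \<noteq> 0} \<and> finite {l. z l \<noteq> 0} \<and> y 0 = 1 \<and> z 0 = 0 \<and>
     (\<forall>l. n0 * y l + n1 * z l = y (Suc l) + eta (Suc l) \<and>
          n1 * y l + n0 * z l = z (Suc l) + omega (Suc l))"

lemma parity_recurrence_determines_distribution:
  assumes "parity_recurrence n0 n1 eta omega y z" "parity_recurrence n0 n1 eta' omega' y z"
  shows "eta (Suc l) = eta' (Suc l) \<and> omega (Suc l) = omega' (Suc l)"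
proof -
  have "n0 * y l + n1 * z l = y (Suc l) + eta (Suc l)" "n1 * y l + n0 * z l = z (Suc l) + omega (Suc l)"
    "n0 * y l + n1 * z l = y (Suc l) + eta' (Suc l)" "n1 * y l + n0 * z l = z (Suc l) + omega' (Suc l)"
    using assms unfolding parity_recurrence_def by blast+
  then show ?thesis
    by linarith
qed

lemma all_ge_one_iff_all_Suc: "(\<forall>l\<ge>1. P l) \<longleftrightarrow> (\<forall>l. P (Suc l))"
  by (metis One_nat_def Suc_le_D Suc_le_mono le0)

lemma int_recurrence_iff_parity_recurrence:
  "finite {l. y l \<noteq> 0} \<and> finite {l. z l \<noteq> 0} \<and> y 0 = 1 \<and> z 0 = 0 \<and>
   (\<forall>l\<ge>1. int (eta l) = int n0 * int (y (l - 1)) + int n1 * int (z (l - 1)) - int (y l) \<and>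
           int (omega l) = int n1 * int (y (l - 1)) + int n0 * int (z (l - 1)) - int (z l)) \<longleftrightarrow>
   parity_recurrence n0 n1 eta omega y z"
proof -
  have diff: "int a = int b - int c \<longleftrightarrow> b = c + a" for a b c
    by linarith
  show ?thesis
    unfolding parity_recurrence_def all_ge_one_iff_all_Suc diff_Suc_1
    by (simp flip: of_nat_mult of_nat_add add: diff)
qed

text \<open>A l is the set of inner nodes of depth l; every other child of an inner node is a leaf.\<close>

locale word_tree =
  fixes Y :: "'a set" and A :: "nat \<Rightarrow> 'a list set"
  assumes finite_alphabet: "finite Y" and alphabet_nonempty: "Y \<noteq> {}"
    and root: "A 0 = {[]}" and grow: "A (Suc l) \<subseteq> children Y (A l)"
    and finite_height: "finite {l. A l \<noteq> {}}"
begin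

definition leaves :: "'a list set" where
  "leaves = (\<Union>l. children Y (A l) - A (Suc l))"

lemma finite_level: "finite (A l)"
proof (induction l)
  case (Suc l)
  then show ?case
    using finite_subset[OF grow finite_children] finite_alphabet by blast
qed (simp add: root)

lemma level_words: "w \<in> A l \<Longrightarrow> length w = l \<and> set w \<subseteq> Y"
proof (induction l arbitrary: w)
  case (Suc l)
  then have "w \<in> children Y (A l)"
    using grow by blast
  then show ?case
    using Suc.IH by (cases w rule: rev_cases) auto
qed (simp add: root)

lemma children_words: "v \<in> children Y (A l) \<Longrightarrow> length v = Suc l \<and> set v \<subseteq> Y"
  using level_words by (fastforce simp: children_def)

lemma level_prefix_closed: "w \<in> A l \<Longrightarrow> prefix v w \<Longrightarrow> v \<in> A (length v)"
proof (induction l arbitrary: w)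
  case (Suc l)
  then have "w \<in> children Y (A l)"
    using grow by blast
  then obtain u c where w: "w = u @ [c]" "u \<in> A l"
    by (auto simp: children_def)
  show ?case
  proof (cases "v = w")
    case True
    then show ?thesis
      using Suc.prems(1) level_words by metis
  next
    case False
    then have "prefix v u"
      using Suc.prems(2) w(1) by simp
    then show ?thesis
      using Suc.IH w(2) by blast
  qed
qed (simp add: root)

lemma eventually_empty: "\<exists>N. \<forall>l\<ge>N. A l = {}"
  using finite_height by (metis (mono_tags) finite_nat_set_iff_bounded mem_Collect_eq not_le)

lemma leavesE:
  assumes "w \<in> leaves"
  obtains l where "w \<in> children Y (A l)" "w \<notin> A (Suc l)"
  using assms by (auto simp: leaves_def)

lemma leaves_level: "{w\<in>leaves. length w = Suc l} = children Y (A l) - A (Suc l)"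
proof
  show "{w\<in>leaves. length w = Suc l} \<subseteq> children Y (A l) - A (Suc l)"
  proof
    fix w
    assume w: "w \<in> {w\<in>leaves. length w = Suc l}"
    then obtain k where k: "w \<in> children Y (A k)" "w \<notin> A (Suc k)"
      by (auto elim: leavesE)
    moreover have "k = l"
      using k(1) w children_words by fastforce
    ultimately show "w \<in> children Y (A l) - A (Suc l)"
      by simp
  qed
  show "children Y (A l) - A (Suc l) \<subseteq> {w\<in>leaves. length w = Suc l}"
    by (auto simp: leaves_def dest: children_words)
qed

lemma leaves_words: "w \<in> leaves \<Longrightarrow> w \<noteq> [] \<and> set w \<subseteq> Y"
  by (auto elim!: leavesE dest: children_words)

lemma finite_leaves: "finite leaves"
proof -
  obtain N where N: "\<forall>l\<ge>N. A l = {}"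
    using eventually_empty by blast
  have "leaves \<subseteq> (\<Union>l<N. children Y (A l))"
  proof
    fix w
    assume "w \<in> leaves"
    then obtain l where l: "w \<in> children Y (A l)"
      by (auto elim: leavesE)
    then have "A l \<noteq> {}"
      by (auto simp: children_def)
    then have "l < N"
      using N not_le by blast
    with l show "w \<in> (\<Union>l<N. children Y (A l))"
      by blast
  qed
  then show ?thesis
    by (rule finite_subset) (simp add: finite_children finite_level finite_alphabet)
qed

lemma leaves_prefix_free: "u \<in> leaves \<Longrightarrow> v \<in> leaves \<Longrightarrow> prefix u v \<Longrightarrow> u = v"
proof (rule ccontr)
  assume u: "u \<in> leaves" and v: "v \<in> leaves" and uv: "prefix u v" "u \<noteq> v"
  obtain k where "v \<in> children Y (A k)"
    using v by (auto elim: leavesE)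
  then have "butlast v \<in> A (length (butlast v))"
    using level_words by (metis mem_children_iff)
  moreover have "prefix u (butlast v)"
    using uv v leaves_words by (metis prefix_snoc snoc_eq_iff_butlast)
  ultimately have "u \<in> A (length u)"
    by (rule level_prefix_closed)
  then show False
    using u by (auto simp: leaves_def dest: children_words)
qed

lemma leaf_prefix_or_node: "set w \<subseteq> Y \<Longrightarrow> (\<exists>u\<in>leaves. prefix u w) \<or> w \<in> A (length w)"
proof (induction w rule: rev_induct)
  case (snoc c w)
  show ?case
  proof (cases "(\<exists>u\<in>leaves. prefix u w) \<or> w @ [c] \<in> A (length (w @ [c]))")
    case False
    then have "w @ [c] \<in> children Y (A (length w)) - A (Suc (length w))"
      using snoc by auto
    then have "w @ [c] \<in> leaves"
      by (auto simp: leaves_def)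
    then show ?thesis
      by blast
  qed auto
qed (simp add: root)

lemma node_prefix_of_leaf: "w \<in> A l \<Longrightarrow> \<exists>u\<in>leaves. prefix w u"
proof -
  obtain N where N: "\<forall>l\<ge>N. A l = {}"
    using eventually_empty by blast
  obtain c where c: "c \<in> Y"
    using alphabet_nonempty by blast
  show "w \<in> A l \<Longrightarrow> \<exists>u\<in>leaves. prefix w u"
  proof (induction "N - l" arbitrary: l w rule: less_induct)
    case less
    show ?case
    proof (cases "w @ [c] \<in> A (Suc l)")
      case True
      then have "Suc l < N"
        using N by (metis empty_iff not_le)
      then have "N - Suc l < N - l"
        by arith
      then show ?thesis
        using less.hyps[OF _ True] by (meson prefix_order.trans prefixI)
    next
      case False
      then have "w @ [c] \<in> leaves"
        using less.prems c by (auto simp: leaves_def)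
      then show ?thesis
        by (meson prefixI)
    qed
  qed
qed

theorem complete_prefix_code_leaves: "complete_prefix_code Y leaves"
  unfolding complete_prefix_code_def
  using finite_leaves leaves_words leaves_prefix_free leaf_prefix_or_node node_prefix_of_leaf
  by blast

context
  fixes Y0 Y1 :: "'a set"
  assumes partition: "Y0 \<union> Y1 = Y" "Y0 \<inter> Y1 = {}"
begin

lemma card_parity_children_level:
  "card Y0 * card_even Y1 (A l) + card Y1 * card_odd Y1 (A l) =
     card_even Y1 (A (Suc l)) + card_even Y1 {w\<in>leaves. length w = Suc l}"
  "card Y1 * card_even Y1 (A l) + card Y0 * card_odd Y1 (A l) =
     card_odd Y1 (A (Suc l)) + card_odd Y1 {w\<in>leaves. length w = Suc l}"
proof -
  have C: "finite (children Y (A l))"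
    by (simp add: finite_children finite_level finite_alphabet)
  show "card Y0 * card_even Y1 (A l) + card Y1 * card_odd Y1 (A l) =
      card_even Y1 (A (Suc l)) + card_even Y1 {w\<in>leaves. length w = Suc l}"
    unfolding leaves_level
    using card_even_Diff_add[OF C grow, of Y1] card_even_children[OF finite_alphabet partition finite_level[of l]]
    by linarith
  show "card Y1 * card_even Y1 (A l) + card Y0 * card_odd Y1 (A l) =
      card_odd Y1 (A (Suc l)) + card_odd Y1 {w\<in>leaves. length w = Suc l}"
    unfolding leaves_level
    using card_odd_Diff_add[OF C grow, of Y1] card_odd_children[OF finite_alphabet partition finite_level[of l]]
    by linarith
qed

theorem parity_recurrence_levels:
  "parity_recurrence (card Y0) (card Y1)
     (\<lambda>l. card_even Y1 {w\<in>leaves. length w = l}) (\<lambda>l. card_odd Y1 {w\<in>leaves. length w = l})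
     (\<lambda>l. card_even Y1 (A l)) (\<lambda>l. card_odd Y1 (A l))"
proof -
  have "finite {l. card_even Y1 (A l) \<noteq> 0}" "finite {l. card_odd Y1 (A l) \<noteq> 0}"
    by (auto simp: card_even_def card_odd_def intro: finite_subset[OF _ finite_height])
  moreover have "card_even Y1 (A 0) = 1" "card_odd Y1 (A 0) = 0"
    by (simp_all add: root)
  ultimately show ?thesis
    unfolding parity_recurrence_def using card_parity_children_level by blast
qed

end

end

definition inner_nodes :: "'a set \<Rightarrow> 'a list set \<Rightarrow> nat \<Rightarrow> 'a list set" where
  "inner_nodes Y S l = {w. length w = l \<and> set w \<subseteq> Y \<and> (\<forall>u\<in>S. \<not> prefix u w)}"

context
  fixes Y :: "'a set" and S :: "'a list set"
  assumes code: "complete_prefix_code Y S" and finite: "finite Y" and nonempty: "Y \<noteq> {}"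
begin

lemma word_tree_inner_nodes: "word_tree Y (inner_nodes Y S)"
proof
  show "inner_nodes Y S 0 = {[]}"
    using code by (auto simp: inner_nodes_def complete_prefix_code_def)
  show "inner_nodes Y S (Suc l) \<subseteq> children Y (inner_nodes Y S l)" for l
  proof
    fix w
    assume "w \<in> inner_nodes Y S (Suc l)"
    then obtain v c where w: "w = v @ [c]" "length v = l" "set v \<subseteq> Y" "c \<in> Y"
      and no_prefix: "\<forall>u\<in>S. \<not> prefix u (v @ [c])"
      by (cases w rule: rev_cases) (auto simp: inner_nodes_def)
    have "\<forall>u\<in>S. \<not> prefix u v"
      using no_prefix by (auto intro: prefix_order.trans)
    with w show "w \<in> children Y (inner_nodes Y S l)"
      by (auto simp: inner_nodes_def)
  qed
  have "{l. inner_nodes Y S l \<noteq> {}} \<subseteq> (\<Union>u\<in>S. {..length u})"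
  proof
    fix l
    assume "l \<in> {l. inner_nodes Y S l \<noteq> {}}"
    then obtain w where w: "length w = l" "set w \<subseteq> Y" "\<forall>u\<in>S. \<not> prefix u w"
      by (auto simp: inner_nodes_def)
    then obtain u where "u \<in> S" "prefix w u"
      using code by (auto simp: complete_prefix_code_def)
    with w(1) show "l \<in> (\<Union>u\<in>S. {..length u})"
      by (auto dest: prefix_length_le)
  qed
  moreover have "finite (\<Union>u\<in>S. {..length u})"
    using code by (simp add: complete_prefix_code_def)
  ultimately show "finite {l. inner_nodes Y S l \<noteq> {}}"
    by (rule finite_subset)
qed (use finite nonempty in auto)

lemma butlast_mem_inner_nodes:
  assumes w: "w \<in> S"
  shows "butlast w \<in> inner_nodes Y S (length w - 1)"
proof -
  have w_word: "w \<noteq> []" "set w \<subseteq> Y"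
    using code w by (auto simp: complete_prefix_code_def)
  have "\<not> prefix u (butlast w)" if "u \<in> S" for u
  proof
    assume u: "prefix u (butlast w)"
    have "length (butlast w) < length w"
      using w_word(1) by simp
    then have "u \<noteq> w"
      using prefix_length_le[OF u] by (metis leD)
    moreover have "prefix u w"
      using u prefix_order.trans prefixeq_butlast by blast
    ultimately show False
      using code w \<open>u \<in> S\<close> by (auto simp: complete_prefix_code_def)
  qed
  then show ?thesis
    using w_word by (auto simp: inner_nodes_def dest: in_set_butlastD)
qed

lemma leaves_inner_nodes: "word_tree.leaves Y (inner_nodes Y S) = S"
proof -
  interpret word_tree Y "inner_nodes Y S"
    by (rule word_tree_inner_nodes)
  show ?thesis
  proof
    show "leaves \<subseteq> S"
    proof
      fix w
      assume "w \<in> leaves"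
      then obtain l where l: "w \<in> children Y (inner_nodes Y S l)" "w \<notin> inner_nodes Y S (Suc l)"
        by (rule leavesE)
      then obtain u where u: "u \<in> S" "prefix u w"
        using children_words[OF l(1)] by (auto simp: inner_nodes_def)
      have w: "w = butlast w @ [last w]" "butlast w \<in> inner_nodes Y S l"
        using l(1) by (auto simp: mem_children_iff)
      then have "\<not> prefix u (butlast w)"
        using u(1) by (auto simp: inner_nodes_def)
      then have "u = w"
        using u(2) w(1) by (metis prefix_snoc)
      with u(1) show "w \<in> S"
        by simp
    qed
    show "S \<subseteq> leaves"
    proof
      fix w
      assume w: "w \<in> S"
      then have "w \<noteq> []" "set w \<subseteq> Y"
        using code by (auto simp: complete_prefix_code_def)
      then have "w \<in> children Y (inner_nodes Y S (length w - 1))"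
        using butlast_mem_inner_nodes[OF w] last_in_set by (auto simp: mem_children_iff)
      moreover have "w \<notin> inner_nodes Y S (Suc (length w - 1))"
        using w by (auto simp: inner_nodes_def)
      ultimately show "w \<in> leaves"
        by (auto simp: leaves_def)
    qed
  qed
qed

end

context
  fixes Y Y0 Y1 :: "'a set"
  assumes finite: "finite Y" and nonempty: "Y \<noteq> {}"
    and partition: "Y0 \<union> Y1 = Y" "Y0 \<inter> Y1 = {}"
begin

lemma ex_next_level_with_parity_cards:
  assumes "parity_recurrence (card Y0) (card Y1) eta omega y z"
    and "finite B" "card_even Y1 B = y l" "card_odd Y1 B = z l"
  shows "\<exists>B'\<subseteq>children Y B. finite B' \<and> card_even Y1 B' = y (Suc l) \<and> card_odd Y1 B' = z (Suc l)"
proof -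
  have C: "finite (children Y B)"
    using assms(2) finite by (simp add: finite_children)
  have "card Y0 * y l + card Y1 * z l = y (Suc l) + eta (Suc l)"
    "card Y1 * y l + card Y0 * z l = z (Suc l) + omega (Suc l)"
    using assms(1) unfolding parity_recurrence_def by blast+
  then have "y (Suc l) \<le> card_even Y1 (children Y B)" "z (Suc l) \<le> card_odd Y1 (children Y B)"
    using assms(2-4) card_even_children[OF finite partition] card_odd_children[OF finite partition]
    by simp_all
  then obtain B' where B': "B' \<subseteq> children Y B" "card_even Y1 B' = y (Suc l)" "card_odd Y1 B' = z (Suc l)"
    by (rule obtain_subset_with_parity_cards[OF C])
  moreover have "finite B'"
    using finite_subset[OF B'(1) C] .
  ultimately show ?thesis
    by blast
qed

lemma ex_word_tree_with_parity_cards: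
  assumes "parity_recurrence (card Y0) (card Y1) eta omega y z"
  shows "\<exists>A. word_tree Y A \<and> (\<forall>l. card_even Y1 (A l) = y l \<and> card_odd Y1 (A l) = z l)"
proof -
  \<comment> \<open>The counts alone do not pin down the root, hence the last conjunct.\<close>
  let ?P = "\<lambda>l B. finite B \<and> card_even Y1 B = y l \<and> card_odd Y1 B = z l \<and> (l = 0 \<longrightarrow> B = {[]})"
  have step: "\<exists>B'. ?P (Suc l) B' \<and> B' \<subseteq> children Y B" if "?P l B" for l B
  proof -
    have "finite B" "card_even Y1 B = y l" "card_odd Y1 B = z l"
      using that by simp_all
    then obtain B' where "B' \<subseteq> children Y B"
      and "finite B' \<and> card_even Y1 B' = y (Suc l) \<and> card_odd Y1 B' = z (Suc l)"
      using ex_next_level_with_parity_cards[OF assms] by blast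
    then show ?thesis
      by (intro exI[of _ B']) simp
  qed
  have "?P 0 {[]}"
    using assms by (simp add: parity_recurrence_def)
  then have "\<exists>A. \<forall>l. ?P l (A l) \<and> A (Suc l) \<subseteq> children Y (A l)"
    using step by (intro dependent_nat_choice) blast+
  then obtain A where "\<forall>l. ?P l (A l) \<and> A (Suc l) \<subseteq> children Y (A l)" ..
  then have A: "?P l (A l)" "A (Suc l) \<subseteq> children Y (A l)" for l
    by simp_all
  have "{l. A l \<noteq> {}} \<subseteq> {l. y l \<noteq> 0} \<union> {l. z l \<noteq> 0}"
  proof
    fix l
    assume "l \<in> {l. A l \<noteq> {}}"
    then have "y l + z l \<noteq> 0"
      using A(1)[of l] card_even_plus_card_odd[of "A l" Y1] by auto
    then show "l \<in> {l. y l \<noteq> 0} \<union> {l. z l \<noteq> 0}"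
      by auto
  qed
  moreover have "finite ({l. y l \<noteq> 0} \<union> {l. z l \<noteq> 0})"
    using assms by (simp add: parity_recurrence_def)
  ultimately have "finite {l. A l \<noteq> {}}"
    by (rule finite_subset)
  then have "word_tree Y A"
    using A(1)[of 0] A(2) finite nonempty by unfold_locales simp_all
  then show ?thesis
    using A(1) by (intro exI[of _ A]) simp
qed

lemma ex_complete_prefix_code_iff_ex_parity_recurrence:
  "(\<exists>S. complete_prefix_code Y S \<and>
      (\<forall>l. eta (Suc l) = card_even Y1 {w\<in>S. length w = Suc l} \<and>
           omega (Suc l) = card_odd Y1 {w\<in>S. length w = Suc l}))
   \<longleftrightarrow> (\<exists>y z. parity_recurrence (card Y0) (card Y1) eta omega y z)"
proof
  assume "\<exists>S. complete_prefix_code Y S \<and>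
      (\<forall>l. eta (Suc l) = card_even Y1 {w\<in>S. length w = Suc l} \<and>
           omega (Suc l) = card_odd Y1 {w\<in>S. length w = Suc l})"
  then obtain S where S: "complete_prefix_code Y S"
    and counts: "\<forall>l. eta (Suc l) = card_even Y1 {w\<in>S. length w = Suc l} \<and>
           omega (Suc l) = card_odd Y1 {w\<in>S. length w = Suc l}"
    by blast
  show "\<exists>y z. parity_recurrence (card Y0) (card Y1) eta omega y z"
  proof (intro exI)
    show "parity_recurrence (card Y0) (card Y1) eta omega
        (\<lambda>l. card_even Y1 (inner_nodes Y S l)) (\<lambda>l. card_odd Y1 (inner_nodes Y S l))"
      using word_tree.parity_recurrence_levels[OF word_tree_inner_nodes[OF S finite nonempty] partition]
      unfolding leaves_inner_nodes[OF S finite nonempty] parity_recurrence_def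
      by (simp add: counts)
  qed
next
  assume "\<exists>y z. parity_recurrence (card Y0) (card Y1) eta omega y z"
  then obtain y z where rec: "parity_recurrence (card Y0) (card Y1) eta omega y z"
    by blast
  obtain A where A: "word_tree Y A" "\<And>l. card_even Y1 (A l) = y l" "\<And>l. card_odd Y1 (A l) = z l"
    using ex_word_tree_with_parity_cards[OF rec] by blast
  have "parity_recurrence (card Y0) (card Y1)
      (\<lambda>l. card_even Y1 {w\<in>word_tree.leaves Y A. length w = l})
      (\<lambda>l. card_odd Y1 {w\<in>word_tree.leaves Y A. length w = l}) y z"
    using word_tree.parity_recurrence_levels[OF A(1) partition] by (simp add: A(2,3))
  then have "\<forall>l. eta (Suc l) = card_even Y1 {w\<in>word_tree.leaves Y A. length w = Suc l} \<and>
      omega (Suc l) = card_odd Y1 {w\<in>word_tree.leaves Y A. length w = Suc l}"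
    using parity_recurrence_determines_distribution[OF rec] by simp
  then show "\<exists>S. complete_prefix_code Y S \<and>
      (\<forall>l. eta (Suc l) = card_even Y1 {w\<in>S. length w = Suc l} \<and>
           omega (Suc l) = card_odd Y1 {w\<in>S. length w = Suc l})"
    using word_tree.complete_prefix_code_leaves[OF A(1)] by blast
qed

end

theorem lemma2:
  fixes Y Y0 Y1 :: "'a set" and eta omega :: "nat \<Rightarrow> nat"
  assumes "finite Y"
    and "Y0 \<union> Y1 = Y" and "Y0 \<inter> Y1 = {}" and "Y0 \<noteq> {}" and "Y1 \<noteq> {}"
    and "finite {l. l \<ge> 1 \<and> eta l \<noteq> 0}" and "finite {l. l \<ge> 1 \<and> omega l \<noteq> 0}"
  shows "(\<exists>L. prefix_free_list Y L \<and> exhaustive_list Y L \<and>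
              has_length_distribution Y1 L eta omega)
     \<longleftrightarrow> (\<exists>y z :: nat \<Rightarrow> nat.
              finite {l. y l \<noteq> 0} \<and> finite {l. z l \<noteq> 0} \<and> y 0 = 1 \<and> z 0 = 0 \<and>
              (\<forall>l\<ge>1. int (eta l) = int (card Y0) * int (y (l - 1)) + int (card Y1) * int (z (l - 1)) - int (y l) \<and>
                      int (omega l) = int (card Y1) * int (y (l - 1)) + int (card Y0) * int (z (l - 1)) - int (z l)))"
proof -
  have nonempty: "Y \<noteq> {}"
    using assms(2,4) by blast
  show ?thesis
    unfolding int_recurrence_iff_parity_recurrence
    unfolding ex_code_list_iff_ex_complete_prefix_code all_ge_one_iff_all_Suc
    by (rule ex_complete_prefix_code_iff_ex_parity_recurrence[OF assms(1) nonempty assms(2,3)])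
qed

end
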